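(* Let $k\in\mathbb{N}$, $p\in[1,\infty]$, and $\alpha,\beta\ge 0$. Any algorithm that is a $(k,p,\alpha,\beta)$-coreset estimator is an $(\mathcal{F}^{\mathrm{coreset}}_{p,k}, 4\alpha+\beta)$-accurate sanitizer.
   Context: Let $\mathbb{B}_{p,d}=\{x\in\mathbb{R}^d:\|x\|_p\le 1\}$. For $\mathcal{C}\in\mathbb{B}_{p,d}^k$ and $x\in\mathbb{B}_{p,d}$, $\mathrm{cost}_{\mathcal{C},p}(x)=\min_{c\in\mathcal{C}}\|x-c\|_p^2$; for a query $f$ and dataset $D$ (finite tuple of points), $f(D)=\mathbb{E}_{x\sim D}[f(x)]$ (average over points of $D$). A dataset $\tilde D \in \mathbb{B}_{p,d}^*$ (of any size) is a $(k,p,\alpha,\beta)$-coreset of $D \in \mathbb{B}_{p,d}^*$ if for all $\mathcal{C}\in\mathbb{B}_{p,d}^k$, $(1-\alpha)\,\mathrm{cost}_{\mathcal{C},p}(D) - \beta \le \mathrm{cost}_{\mathcal{C},p}(\tilde D) \le (1+\alpha)\,\mathrm{cost}_{\mathcal{C},p}(D) + \beta$. An algorithm $\mathcal{A}$ is a $(k,p,\alpha,\beta,d,n)$-coreset estimator if for every $D\in\mathbb{B}_{p,d}^n$, with probability at least $2/3$, $\mathcal{A}(D)$ is a $(k,p,\alpha,\beta)$-coreset of $D$; it is a $(k,p,\alpha,\beta)$-coreset estimator if there is a constant $\nu>0$ such that for all $d\in\mathbb{N}$ and $n\ge\Theta(d^\nu)$ it is a $(k,p,\alpha,\beta,d,n)$-coreset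 estimator. A sanitizer maps datasets to datasets. For a family $\mathcal{F}$ of queries, $\tilde D$ is an $(\mathcal{F},a)$-accurate estimate of $D$ if $|f(\tilde D)-f(D)|\le a$ for all $f\in\mathcal{F}$; a sanitizer is $(\mathcal{F},a,n)$-accurate if for every $D\in\mathcal{X}^n$, with probability at least $2/3$ its output is an $(\mathcal{F},a)$-accurate estimate of $D$. With $\mathcal{F}^{\mathrm{coreset}}_{p,d,k}=\{\mathrm{cost}_{\mathcal{C},p}:\mathcal{C}\in\mathbb{B}_{p,d}^k\}$ and $\mathcal{F}^{\mathrm{coreset}}_{p,k}=\bigcup_d\mathcal{F}^{\mathrm{coreset}}_{p,d,k}$, a sanitizer is $(\mathcal{F}^{\mathrm{coreset}}_{p,k},a)$-accurate if there is a constant $\nu>0$ such that for all $d\in\mathbb{N}$ and $n\ge\Theta(d^\nu)$ it is $(\mathcal{F}^{\mathrm{coreset}}_{p,d,k},a,n)$-accurate. *)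

theory Defs
  imports "HOL-Probability.Probability_Mass_Function" "HOL-Library.Extended_Real"
begin

text \<open>Points of \<real>^d are lists of reals of length d; a dataset is a list of points
  (a finite tuple). The exponent p ranges over [1, \<infinity>], modelled as an ereal.\<close>

definition pnorm :: "ereal \<Rightarrow> real list \<Rightarrow> real" where
  "pnorm p x = (if p = \<infinity> then foldr max (map abs x) 0
                else (\<Sum>a\<leftarrow>x. \<bar>a\<bar> powr real_of_ereal p) powr (1 / real_of_ereal p))"

definition pball :: "ereal \<Rightarrow> nat \<Rightarrow> real list set" where
  "pball p d = {x. length x = d \<and> pnorm p x \<le> 1}"

definition cost :: "ereal \<Rightarrow> real list list \<Rightarrow> real list \<Rightarrow> real" where
  "cost p C x = Min ((\<lambda>c. (pnorm p (map2 (-) x c))\<^sup>2) ` set C)"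

text \<open>f(D) = average of f over the points of D (0 for the empty dataset).\<close>
definition avg :: "(real list \<Rightarrow> real) \<Rightarrow> real list list \<Rightarrow> real" where
  "avg f D = (\<Sum>x\<leftarrow>D. f x) / real (length D)"

definition centers :: "nat \<Rightarrow> ereal \<Rightarrow> nat \<Rightarrow> real list list set" where
  "centers k p d = {C. length C = k \<and> set C \<subseteq> pball p d}"

definition is_coreset ::
  "nat \<Rightarrow> ereal \<Rightarrow> real \<Rightarrow> real \<Rightarrow> nat \<Rightarrow> real list list \<Rightarrow> real list list \<Rightarrow> bool" where
  "is_coreset k p \<alpha> \<beta> d D' D \<longleftrightarrow> set D' \<subseteq> pball p d \<and>
     (\<forall>C \<in> centers k p d.
        (1 - \<alpha>) * avg (cost p C) D - \<beta> \<le> avg (cost p C) D' \<and>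
        avg (cost p C) D' \<le> (1 + \<alpha>) * avg (cost p C) D + \<beta>)"

type_synonym algorithm = "real list list \<Rightarrow> real list list pmf"

definition coreset_estimator_dn ::
  "algorithm \<Rightarrow> nat \<Rightarrow> ereal \<Rightarrow> real \<Rightarrow> real \<Rightarrow> nat \<Rightarrow> nat \<Rightarrow> bool" where
  "coreset_estimator_dn A k p \<alpha> \<beta> d n \<longleftrightarrow>
     (\<forall>D. length D = n \<and> set D \<subseteq> pball p d \<longrightarrow>
        measure_pmf.prob (A D) {D'. is_coreset k p \<alpha> \<beta> d D' D} \<ge> 2/3)"

text \<open>"n \<ge> \<Theta>(d^\<nu>)" is read as: n \<ge> c * d^\<nu> for some constant c > 0.\<close>
definition coreset_estimator :: "algorithm \<Rightarrow> nat \<Rightarrow> ereal \<Rightarrow> real \<Rightarrow> real \<Rightarrow> bool" where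
  "coreset_estimator A k p \<alpha> \<beta> \<longleftrightarrow>
     (\<exists>\<nu>>0. \<exists>c>0. \<forall>d n. real n \<ge> c * real d powr \<nu> \<longrightarrow> coreset_estimator_dn A k p \<alpha> \<beta> d n)"

definition coreset_queries :: "ereal \<Rightarrow> nat \<Rightarrow> nat \<Rightarrow> (real list \<Rightarrow> real) set" where
  "coreset_queries p d k = {cost p C | C. C \<in> centers k p d}"

definition accurate_estimate ::
  "(real list \<Rightarrow> real) set \<Rightarrow> real \<Rightarrow> real list list \<Rightarrow> real list list \<Rightarrow> bool" where
  "accurate_estimate F a D' D \<longleftrightarrow> (\<forall>f\<in>F. \<bar>avg f D' - avg f D\<bar> \<le> a)"

definition sanitizer_accurate_n ::
  "algorithm \<Rightarrow> real list set \<Rightarrow> (real list \<Rightarrow> real) set \<Rightarrow> real \<Rightarrow> nat \<Rightarrow> bool" where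
  "sanitizer_accurate_n A X F a n \<longleftrightarrow>
     (\<forall>D. length D = n \<and> set D \<subseteq> X \<longrightarrow>
        measure_pmf.prob (A D) {D'. set D' \<subseteq> X \<and> accurate_estimate F a D' D} \<ge> 2/3)"

definition coreset_sanitizer_accurate :: "algorithm \<Rightarrow> ereal \<Rightarrow> nat \<Rightarrow> real \<Rightarrow> bool" where
  "coreset_sanitizer_accurate A p k a \<longleftrightarrow>
     (\<exists>\<nu>>0. \<exists>c>0. \<forall>d n. real n \<ge> c * real d powr \<nu> \<longrightarrow>
        sanitizer_accurate_n A (pball p d) (coreset_queries p d k) a n)"

end

theory Submission
  imports Defs "HOL-Analysis.Analysis"
begin

text \<open>Any two points of the unit p-ball are at p-distance at most 2: for p = \<infinity> coordinatewise,
  and for finite p by convexity of t \<mapsto> t^p, which gives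
  \<Sum>|x_i - c_i|^p \<le> 2^(p-1) (\<Sum>|x_i|^p + \<Sum>|c_i|^p) \<le> 2^p.
  Hence every cost query takes values in [0, 4], so the multiplicative error \<alpha> cost(D)
  of a coreset is at most 4\<alpha>: every (k, p, \<alpha>, \<beta>)-coreset of D is a (4\<alpha> + \<beta>)-accurate
  estimate of D, and the probability of producing an accurate estimate is at least
  that of producing a coreset.\<close>

lemma foldr_max_abs_le_iff:
  "0 \<le> (b::real) \<Longrightarrow> foldr max (map abs xs) 0 \<le> b \<longleftrightarrow> (\<forall>a\<in>set xs. \<bar>a\<bar> \<le> b)"
  by (induction xs) auto

lemma pnorm_nonneg: "0 \<le> pnorm p x"
proof -
  have "0 \<le> foldr max (map abs x) 0"
    by (induction x) (auto simp: le_max_iff_disj)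
  then show ?thesis
    by (simp add: pnorm_def)
qed

lemma pnorm_infinity_le_iff:
  "0 \<le> b \<Longrightarrow> pnorm \<infinity> x \<le> b \<longleftrightarrow> (\<forall>a\<in>set x. \<bar>a\<bar> \<le> b)"
  by (simp add: pnorm_def foldr_max_abs_le_iff)

lemma powr_inverse_le_iff:
  fixes s b q :: real
  assumes "0 \<le> s" "0 \<le> b" "0 < q"
  shows "s powr (1 / q) \<le> b \<longleftrightarrow> s \<le> b powr q"
proof
  assume "s powr (1 / q) \<le> b"
  then have "(s powr (1 / q)) powr q \<le> b powr q"
    using assms by (intro powr_mono2) auto
  then show "s \<le> b powr q"
    using assms by (simp add: powr_powr)
next
  assume "s \<le> b powr q"
  then have "s powr (1 / q) \<le> (b powr q) powr (1 / q)"
    using assms by (intro powr_mono2) auto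
  then show "s powr (1 / q) \<le> b"
    using assms by (simp add: powr_powr)
qed

lemma pnorm_finite_le_iff:
  assumes "p \<noteq> \<infinity>" "1 \<le> p" "0 \<le> b"
  shows "pnorm p x \<le> b \<longleftrightarrow>
    (\<Sum>a\<leftarrow>x. \<bar>a\<bar> powr real_of_ereal p) \<le> b powr real_of_ereal p"
proof -
  have "0 < real_of_ereal p"
    using assms by (cases p) auto
  moreover have "0 \<le> (\<Sum>a\<leftarrow>x. \<bar>a\<bar> powr real_of_ereal p)"
    by (intro sum_list_nonneg) auto
  ultimately show ?thesis
    using assms by (simp add: pnorm_def powr_inverse_le_iff)
qed

lemma add_powr_le_two_powr:
  fixes a b p :: real
  assumes "0 \<le> a" "0 \<le> b" "1 \<le> p"
  shows "(a + b) powr p \<le> 2 powr (p - 1) * (a powr p + b powr p)"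
proof (cases "a = 0 \<or> b = 0")
  case True
  have "1 \<le> 2 powr (p - 1)"
    using assms by (intro ge_one_powr_ge_zero) auto
  then have "a powr p + b powr p \<le> 2 powr (p - 1) * (a powr p + b powr p)"
    using mult_right_mono[of 1 "2 powr (p - 1)" "a powr p + b powr p"] by simp
  then show ?thesis
    using True by auto
next
  case False
  then have "a \<in> {0<..}" "b \<in> {0<..}"
    using assms by auto
  from convex_onD[OF powr_convex[OF assms(3)] _ _ this, of "1/2"]
  have "((a + b) / 2) powr p \<le> (a powr p + b powr p) / 2"
    by (simp add: field_simps)
  moreover have "(a + b) powr p = 2 * 2 powr (p - 1) * ((a + b) / 2) powr p"
    using assms by (simp add: powr_divide powr_diff)
  ultimately show ?thesis
    by simp
qed

lemma sum_list_abs_diff_powr_le: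
  fixes q :: real
  assumes "1 \<le> q" "length x = length c"
  shows "(\<Sum>a\<leftarrow>map2 (-) x c. \<bar>a\<bar> powr q)
    \<le> 2 powr (q - 1) * ((\<Sum>a\<leftarrow>x. \<bar>a\<bar> powr q) + (\<Sum>a\<leftarrow>c. \<bar>a\<bar> powr q))"
  using assms(2)
proof (induction x arbitrary: c)
  case Nil
  then show ?case by simp
next
  case (Cons y x)
  then obtain z c' where c: "c = z # c'" "length x = length c'"
    by (cases c) auto
  have "\<bar>y - z\<bar> powr q \<le> (\<bar>y\<bar> + \<bar>z\<bar>) powr q"
    using assms by (intro powr_mono2) auto
  also have "\<dots> \<le> 2 powr (q - 1) * (\<bar>y\<bar> powr q + \<bar>z\<bar> powr q)"
    using assms by (intro add_powr_le_two_powr) auto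
  finally show ?case
    using Cons.IH[OF c(2)] c(1) by (simp add: algebra_simps)
qed

lemma pnorm_diff_le_2:
  assumes "1 \<le> p" "x \<in> pball p d" "c \<in> pball p d"
  shows "pnorm p (map2 (-) x c) \<le> 2"
proof (cases "p = \<infinity>")
  case True
  have "\<forall>a\<in>set x. \<bar>a\<bar> \<le> 1" "\<forall>a\<in>set c. \<bar>a\<bar> \<le> 1"
    using assms True by (auto simp: pball_def pnorm_infinity_le_iff)
  moreover have "a \<in> set x" "b \<in> set c" if "(a, b) \<in> set (zip x c)" for a b
    using that by (auto dest: set_zip_leftD set_zip_rightD)
  ultimately have "\<bar>a - b\<bar> \<le> 2" if "(a, b) \<in> set (zip x c)" for a b
    using that abs_triangle_ineq4[of a b] by fastforce
  then show ?thesis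
    using True by (auto simp: pnorm_infinity_le_iff)
next
  case False
  define q where "q = real_of_ereal p"
  have "1 \<le> q"
    using assms(1) False unfolding q_def by (cases p) auto
  have "length x = length c"
    using assms by (simp add: pball_def)
  have "(\<Sum>a\<leftarrow>x. \<bar>a\<bar> powr q) \<le> 1" "(\<Sum>a\<leftarrow>c. \<bar>a\<bar> powr q) \<le> 1"
    using assms False by (auto simp: pball_def pnorm_finite_le_iff q_def)
  then have "2 powr (q - 1) * ((\<Sum>a\<leftarrow>x. \<bar>a\<bar> powr q) + (\<Sum>a\<leftarrow>c. \<bar>a\<bar> powr q))
      \<le> 2 powr (q - 1) * 2"
    by (intro mult_left_mono) auto
  also have "\<dots> = 2 powr q"
    by (simp add: powr_diff)
  finally have "(\<Sum>a\<leftarrow>map2 (-) x c. \<bar>a\<bar> powr q) \<le> 2 powr q"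
    using sum_list_abs_diff_powr_le[OF \<open>1 \<le> q\<close> \<open>length x = length c\<close>] by linarith
  then show ?thesis
    using assms(1) False by (simp add: pnorm_finite_le_iff q_def)
qed

lemma cost_nonneg: "C \<noteq> [] \<Longrightarrow> 0 \<le> cost p C x"
  by (simp add: cost_def)

lemma cost_le_4:
  assumes "1 \<le> p" "C \<noteq> []" "set C \<subseteq> pball p d" "x \<in> pball p d"
  shows "cost p C x \<le> 4"
proof -
  obtain c where c: "c \<in> set C"
    using assms(2) by (cases C) auto
  have "pnorm p (map2 (-) x c) \<le> 2"
    using c assms by (intro pnorm_diff_le_2) auto
  then have "(pnorm p (map2 (-) x c))\<^sup>2 \<le> 2\<^sup>2"
    using pnorm_nonneg by (intro power_mono)
  then show ?thesis
    unfolding cost_def using c by (subst Min_le_iff) auto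
qed

lemma avg_nonneg: "(\<And>x. x \<in> set D \<Longrightarrow> 0 \<le> f x) \<Longrightarrow> 0 \<le> avg f D"
  by (auto simp: avg_def intro!: divide_nonneg_nonneg sum_list_nonneg)

lemma avg_le_bound:
  assumes "\<And>x. x \<in> set D \<Longrightarrow> f x \<le> b" "0 \<le> b"
  shows "avg f D \<le> b"
proof (cases "D = []")
  case True
  then show ?thesis
    using assms(2) by (simp add: avg_def)
next
  case False
  have "(\<Sum>x\<leftarrow>D. f x) \<le> (\<Sum>x\<leftarrow>D. b)"
    using assms(1) by (intro sum_list_mono) auto
  then show ?thesis
    using False by (simp add: avg_def sum_list_triv divide_le_eq mult.commute)
qed

lemma abs_diff_le_of_relative_error:
  fixes y y' M \<alpha> \<beta> :: real
  assumes "0 \<le> \<alpha>" "0 \<le> y" "y \<le> M"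
    and "(1 - \<alpha>) * y - \<beta> \<le> y'" "y' \<le> (1 + \<alpha>) * y + \<beta>"
  shows "\<bar>y' - y\<bar> \<le> M * \<alpha> + \<beta>"
proof -
  have "\<alpha> * y \<le> \<alpha> * M"
    using assms by (intro mult_left_mono)
  then show ?thesis
    using assms(4,5) by (simp add: algebra_simps abs_le_iff)
qed

lemma coreset_imp_accurate_estimate:
  assumes "1 \<le> p" "1 \<le> k" "0 \<le> \<alpha>" "set D \<subseteq> pball p d"
    and "is_coreset k p \<alpha> \<beta> d D' D"
  shows "accurate_estimate (coreset_queries p d k) (4 * \<alpha> + \<beta>) D' D"
  unfolding accurate_estimate_def
proof
  fix f
  assume "f \<in> coreset_queries p d k"
  then obtain C where f: "f = cost p C" and C: "C \<in> centers k p d"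
    by (auto simp: coreset_queries_def)
  have "C \<noteq> []" "set C \<subseteq> pball p d"
    using C assms(2) by (auto simp: centers_def)
  then have "0 \<le> avg f D" "avg f D \<le> 4"
    using assms(1,4) f by (auto intro!: avg_nonneg avg_le_bound cost_nonneg cost_le_4)
  moreover have "(1 - \<alpha>) * avg f D - \<beta> \<le> avg f D'" "avg f D' \<le> (1 + \<alpha>) * avg f D + \<beta>"
    using assms(5) C f by (auto simp: is_coreset_def)
  ultimately show "\<bar>avg f D' - avg f D\<bar> \<le> 4 * \<alpha> + \<beta>"
    by (rule abs_diff_le_of_relative_error[OF assms(3)])
qed

lemma coreset_estimator_dn_imp_sanitizer_accurate_n:
  assumes "1 \<le> p" "1 \<le> k" "0 \<le> \<alpha>" "coreset_estimator_dn A k p \<alpha> \<beta> d n"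
  shows "sanitizer_accurate_n A (pball p d) (coreset_queries p d k) (4 * \<alpha> + \<beta>) n"
  unfolding sanitizer_accurate_n_def
proof (intro allI impI)
  fix D :: "real list list"
  assume D: "length D = n \<and> set D \<subseteq> pball p d"
  let ?accurate = "{D'. set D' \<subseteq> pball p d \<and>
    accurate_estimate (coreset_queries p d k) (4 * \<alpha> + \<beta>) D' D}"
  have "{D'. is_coreset k p \<alpha> \<beta> d D' D} \<subseteq> ?accurate"
    using assms(1-3) D by (auto simp: is_coreset_def intro: coreset_imp_accurate_estimate)
  then have "measure_pmf.prob (A D) {D'. is_coreset k p \<alpha> \<beta> d D' D}
      \<le> measure_pmf.prob (A D) ?accurate"
    by (intro measure_pmf.finite_measure_mono) auto
  moreover have "2/3 \<le> measure_pmf.prob (A D) {D'. is_coreset k p \<alpha> \<beta> d D' D}"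
    using assms(4) D unfolding coreset_estimator_dn_def by blast
  ultimately show "2/3 \<le> measure_pmf.prob (A D) ?accurate"
    by linarith
qed

theorem mainTheorem5:
  fixes A :: algorithm and k :: nat and p :: ereal and \<alpha> \<beta> :: real
  assumes "k \<ge> 1" and "1 \<le> p" and "\<alpha> \<ge> 0" and "\<beta> \<ge> 0"
    and "coreset_estimator A k p \<alpha> \<beta>"
  shows "coreset_sanitizer_accurate A p k (4 * \<alpha> + \<beta>)"
proof -
  obtain \<nu> c where "\<nu> > 0" "c > 0"
    and "\<And>d n. c * real d powr \<nu> \<le> real n \<Longrightarrow> coreset_estimator_dn A k p \<alpha> \<beta> d n"
    using assms(5) unfolding coreset_estimator_def by blast
  then show ?thesis
    unfolding coreset_sanitizer_accurate_def
    using assms(1-3) coreset_estimator_dn_imp_sanitizer_accurate_n by blast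
qed

end
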